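(* Let $\varphi$ be a skew-morphism of a finite group $A$ of order $n$ with power function $\pi:A\to\mathbb{Z}_n$, and let $\bar\varphi$ be the induced skew-morphism of $\bar A=A/\mathrm{Core}\,\varphi$. For any $x\in A$ the following are equivalent: (i) $x\in\mathrm{Smooth}\,\varphi$; (ii) $\pi(\varphi^i(x))=\pi(x)$ for all nonnegative integers $i$; (iii) $\bar x=x\,\mathrm{Core}\,\varphi\in\mathrm{Fix}\,\bar\varphi$.
   Context: A skew-morphism of a finite group $A$ is a permutation $\varphi$ of the set $A$ with $\varphi(1)=1$ for which there exists a function $\pi:A\to\mathbb{Z}_n$, where $n$ is the order of $\varphi$ as a permutation, such that $\varphi(xy)=\varphi(x)\varphi^{\pi(x)}(y)$ for all $x,y\in A$; $\pi$ is the power function. The kernel is $\mathrm{Ker}\,\varphi=\{x\in A:\pi(x)=1\}$ (a subgroup of $A$), and the core is $\mathrm{Core}\,\varphi=\bigcap_{i=1}^n\varphi^i(\mathrm{Ker}\,\varphi)$, a $\varphi$-invariant normal subgroup of $A$ contained in $\mathrm{Ker}\,\varphi$. For a $\varphi$-invariant normal subgroup $N$ of $A$, the induced skew-morphism $\bar\varphi$ of $A/N$ is $\bar\varphi(xN)=\varphi(x)N$, with power function $\bar\pi(xN)\equiv\pi(x)\pmod{|\bar\varphi|}$. $\mathrm{Fix}\,\psi$ denotes the set of fixed points of a permutation $\psi$. $\mathrm{Smooth}\,\varphi=\{x\in A:\varphi(x)\in x\,\mathrm{Core}\,\varphi\}$. *)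

theory Defs
  imports "HOL-Algebra.Algebra"
begin

definition perm_order :: "('a, 'b) monoid_scheme \<Rightarrow> ('a \<Rightarrow> 'a) \<Rightarrow> nat" where
  "perm_order G \<phi> = (LEAST n. 0 < n \<and> (\<forall>x\<in>carrier G. (\<phi> ^^ n) x = x))"

text \<open>Skew-morphism with power function pi; Z_n is represented by residues {0..<n}.\<close>
definition skew_morphism :: "('a, 'b) monoid_scheme \<Rightarrow> ('a \<Rightarrow> 'a) \<Rightarrow> ('a \<Rightarrow> nat) \<Rightarrow> bool" where
  "skew_morphism G \<phi> \<pi> \<longleftrightarrow>
     bij_betw \<phi> (carrier G) (carrier G) \<and> \<phi> \<one>\<^bsub>G\<^esub> = \<one>\<^bsub>G\<^esub> \<and>
     (\<forall>x\<in>carrier G. \<pi> x < perm_order G \<phi>) \<and>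
     (\<forall>x\<in>carrier G. \<forall>y\<in>carrier G. \<phi> (x \<otimes>\<^bsub>G\<^esub> y) = \<phi> x \<otimes>\<^bsub>G\<^esub> (\<phi> ^^ \<pi> x) y)"

definition skew_kernel :: "('a, 'b) monoid_scheme \<Rightarrow> ('a \<Rightarrow> 'a) \<Rightarrow> ('a \<Rightarrow> nat) \<Rightarrow> 'a set" where
  "skew_kernel G \<phi> \<pi> = {x \<in> carrier G. \<pi> x = 1 mod perm_order G \<phi>}"

definition skew_core :: "('a, 'b) monoid_scheme \<Rightarrow> ('a \<Rightarrow> 'a) \<Rightarrow> ('a \<Rightarrow> nat) \<Rightarrow> 'a set" where
  "skew_core G \<phi> \<pi> = (\<Inter>i\<in>{1..perm_order G \<phi>}. (\<phi> ^^ i) ` skew_kernel G \<phi> \<pi>)"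

definition skew_smooth :: "('a, 'b) monoid_scheme \<Rightarrow> ('a \<Rightarrow> 'a) \<Rightarrow> ('a \<Rightarrow> nat) \<Rightarrow> 'a set" where
  "skew_smooth G \<phi> \<pi> = {x \<in> carrier G. \<phi> x \<in> x <#\<^bsub>G\<^esub> skew_core G \<phi> \<pi>}"

definition induced_skew :: "('a, 'b) monoid_scheme \<Rightarrow> ('a \<Rightarrow> 'a) \<Rightarrow> 'a set \<Rightarrow> 'a set \<Rightarrow> 'a set" where
  "induced_skew G \<phi> N = (\<lambda>C. \<phi> (SOME x. x \<in> C) <#\<^bsub>G\<^esub> N)"

definition Fix :: "('c \<Rightarrow> 'c) \<Rightarrow> 'c set" where
  "Fix \<psi> = {z. \<psi> z = z}"

end

theory Submission
  imports Defs
begin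

text \<open>
  Let \<open>\<sigma>(x,k) = \<pi>(x) + \<pi>(\<phi> x) + ... + \<pi>(\<phi>^(k-1) x)\<close> (\<open>pi_sum x k\<close>). Iterating the
  skew-morphism rule gives \<open>\<phi>^k(x y) = \<phi>^k(x) \<phi>^\<sigma>(x,k)(y)\<close>, and comparing
  \<open>\<phi>((x y) z)\<close> with \<open>\<phi>(x (y z))\<close> gives \<open>\<pi>(x y) = \<sigma>(y, \<pi> x)\<close> modulo the order of \<open>\<phi>\<close>.
  Every \<open>c\<close> in the core has \<open>\<sigma>(c,k) = k\<close>, so \<open>\<pi>\<close> is constant on left cosets of the
  core. If \<open>\<phi>(x) \<in> x Core\<close>, the coset \<open>x Core\<close> is \<open>\<phi>\<close>-invariant, hence \<open>\<pi>\<close> is constant on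
  the orbit of \<open>x\<close>. Conversely, if it is, then for \<open>u\<close> in the orbit
  \<open>\<pi>(u\<inverse> \<phi> u) = \<pi>(u\<inverse>) \<pi>(x) = \<pi>(u\<inverse> u) = 1\<close>, and \<open>\<phi>(u\<inverse> \<phi> u) = v\<inverse> \<phi> v\<close> for another
  orbit element \<open>v\<close>; so \<open>x\<inverse> \<phi> x\<close> lies in the core. Finally \<open>\<phi>\<close> induces
  \<open>x Core \<mapsto> \<phi>(x) Core\<close> on cosets, whose fixed points are exactly the smooth cosets.
\<close>

lemma sum_mod_eq_mult_const:
  fixes f :: "nat \<Rightarrow> nat"
  assumes "\<And>t. t < m \<Longrightarrow> f t mod n = r mod n"
  shows "(\<Sum>t<m. f t) mod n = (m * r) mod n"
proof -
  have "(\<Sum>t<m. f t) mod n = (\<Sum>t<m. f t mod n) mod n" by (simp add: mod_sum_eq)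
  also have "\<dots> = (\<Sum>t<m. r mod n) mod n" using assms by simp
  also have "\<dots> = (m * r) mod n" by (simp add: mod_mult_right_eq)
  finally show ?thesis .
qed

lemma (in group) finite_submonoid_is_subgroup:
  assumes "finite (carrier G)" and "submonoid H G"
  shows "subgroup H G"
proof (rule submonoid_subgroupI[OF assms(2)])
  fix a assume a: "a \<in> H"
  have aG: "a \<in> carrier G" using assms(2) a by (rule submonoid.mem_carrier)
  obtain k where k: "ord a = Suc k"
    using ord_ge_1[OF assms(1) aG] by (cases "ord a") auto
  have "a [^] k \<otimes> a = \<one>"
    using pow_ord_eq_1[OF aG] k by simp
  then have "inv a = a [^] k"
    using aG by (simp add: inv_equality)
  moreover have "a [^] (n::nat) \<in> H" for n
    by (induction n) (use a assms(2) in \<open>simp_all add: submonoid.one_closed submonoid.m_closed\<close>)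
  ultimately show "inv a \<in> H" by simp
qed

lemma (in group) lcos_eq_iff_mem_lcos:
  assumes "subgroup H G" and "x \<in> carrier G" and "y \<in> carrier G"
  shows "y <#\<^bsub>G\<^esub> H = x <#\<^bsub>G\<^esub> H \<longleftrightarrow> y \<in> x <#\<^bsub>G\<^esub> H"
  using assms lcos_self l_repr_independence by metis

locale finite_skew_morphism = group G for G :: "('a, 'b) monoid_scheme" (structure) +
  fixes \<phi> :: "'a \<Rightarrow> 'a" and \<pi> :: "'a \<Rightarrow> nat"
  assumes finite_carrier: "finite (carrier G)"
    and skew_morphism: "skew_morphism G \<phi> \<pi>"
begin

abbreviation order :: nat where "order \<equiv> perm_order G \<phi>"

lemma bij_betw_phi: "bij_betw \<phi> (carrier G) (carrier G)"
  using skew_morphism by (simp add: skew_morphism_def)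

lemma phi_one: "\<phi> \<one> = \<one>"
  using skew_morphism by (simp add: skew_morphism_def)

lemma pi_less_order: "x \<in> carrier G \<Longrightarrow> \<pi> x < order"
  using skew_morphism by (simp add: skew_morphism_def)

lemma phi_mult:
  "x \<in> carrier G \<Longrightarrow> y \<in> carrier G \<Longrightarrow> \<phi> (x \<otimes> y) = \<phi> x \<otimes> (\<phi> ^^ \<pi> x) y"
  using skew_morphism by (simp add: skew_morphism_def)

lemma bij_betw_funpow_phi: "bij_betw (\<phi> ^^ k) (carrier G) (carrier G)"
  by (rule bij_betw_funpow[OF bij_betw_phi])

lemma funpow_phi_closed [intro, simp]: "x \<in> carrier G \<Longrightarrow> (\<phi> ^^ k) x \<in> carrier G"
  by (rule bij_betw_apply[OF bij_betw_funpow_phi])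

lemma phi_closed [intro, simp]: "x \<in> carrier G \<Longrightarrow> \<phi> x \<in> carrier G"
  using funpow_phi_closed[of x 1] by simp

lemma funpow_phi_one [simp]: "(\<phi> ^^ k) \<one> = \<one>"
  by (induction k) (simp_all add: phi_one)

lemma funpow_phi_cancel:
  "(\<phi> ^^ k) x = (\<phi> ^^ k) y \<Longrightarrow> x \<in> carrier G \<Longrightarrow> y \<in> carrier G \<Longrightarrow> x = y"
  using bij_betw_imp_inj_on[OF bij_betw_funpow_phi] by (rule inj_onD)

lemma exists_funpow_phi_period: "\<exists>m>0. \<forall>x\<in>carrier G. (\<phi> ^^ m) x = x"
proof -
  define F where "F i = restrict (\<phi> ^^ i) (carrier G)" for i :: nat
  have "range F \<subseteq> carrier G \<rightarrow>\<^sub>E carrier G"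
    by (auto simp: F_def restrict_PiE_iff)
  then have "finite (range F)"
    by (rule finite_subset) (simp add: finite_PiE finite_carrier)
  then have "\<not> inj F"
    using finite_imageD infinite_UNIV_nat by meson
  then obtain i j where "i \<noteq> j" "F i = F j"
    unfolding inj_def by blast
  then obtain i j where "i < j" "F i = F j"
    by (metis linorder_neqE_nat)
  show ?thesis
  proof (intro exI conjI ballI)
    show "0 < j - i" using \<open>i < j\<close> by simp
    fix x assume x: "x \<in> carrier G"
    have "(\<phi> ^^ i) ((\<phi> ^^ (j - i)) x) = (\<phi> ^^ j) x"
      using \<open>i < j\<close> funpow_add[of i "j - i" \<phi>] by simp
    also have "\<dots> = (\<phi> ^^ i) x"
      using fun_cong[OF \<open>F i = F j\<close>, of x] x by (simp add: F_def)
    finally show "(\<phi> ^^ (j - i)) x = x"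
      by (rule funpow_phi_cancel) (use x in auto)
  qed
qed

lemma order_pos: "0 < order"
  and funpow_order: "x \<in> carrier G \<Longrightarrow> (\<phi> ^^ order) x = x"
  using LeastI_ex[OF exists_funpow_phi_period] unfolding perm_order_def by auto

lemma order_le: "0 < d \<Longrightarrow> \<forall>x\<in>carrier G. (\<phi> ^^ d) x = x \<Longrightarrow> order \<le> d"
  unfolding perm_order_def by (rule Least_le) simp

lemma funpow_phi_mod_order: "x \<in> carrier G \<Longrightarrow> (\<phi> ^^ (m mod order)) x = (\<phi> ^^ m) x"
  by (rule funpow_mod_eq[OF funpow_order])

lemma funpow_phi_cong:
  "a mod order = b mod order \<Longrightarrow> x \<in> carrier G \<Longrightarrow> (\<phi> ^^ a) x = (\<phi> ^^ b) x"
  using funpow_phi_mod_order[of x a] funpow_phi_mod_order[of x b] by simp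

lemma funpow_phi_eq_imp_mod_eq:
  assumes "\<forall>y\<in>carrier G. (\<phi> ^^ a) y = (\<phi> ^^ b) y"
  shows "a mod order = b mod order"
proof -
  have *: "a mod order = b mod order"
    if "a \<le> b" and eq: "\<forall>y\<in>carrier G. (\<phi> ^^ a) y = (\<phi> ^^ b) y" for a b
  proof -
    have "(\<phi> ^^ (b - a)) y = y" if y: "y \<in> carrier G" for y
    proof -
      have "(\<phi> ^^ a) ((\<phi> ^^ (b - a)) y) = (\<phi> ^^ b) y"
        using \<open>a \<le> b\<close> funpow_add[of a "b - a" \<phi>] by simp
      also have "\<dots> = (\<phi> ^^ a) y"
        using eq y by simp
      finally show ?thesis
        by (rule funpow_phi_cancel) (use y in auto)
    qed
    then have "\<forall>y\<in>carrier G. (\<phi> ^^ ((b - a) mod order)) y = y"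
      by (simp add: funpow_phi_mod_order)
    have "(b - a) mod order = 0"
    proof (rule ccontr)
      assume "(b - a) mod order \<noteq> 0"
      then have "order \<le> (b - a) mod order"
        using \<open>\<forall>y\<in>carrier G. (\<phi> ^^ ((b - a) mod order)) y = y\<close> by (simp add: order_le)
      then show False
        using mod_less_divisor[OF order_pos, of "b - a"] by simp
    qed
    then have "order dvd b - a"
      by (simp add: dvd_eq_mod_eq_0)
    then show ?thesis
      using \<open>a \<le> b\<close> mod_eq_dvd_iff_nat[of a b order] by simp
  qed
  show ?thesis
  proof (cases "a \<le> b")
    case True
    then show ?thesis using assms by (rule *)
  next
    case False
    then have "b mod order = a mod order"
      using assms by (intro *) auto
    then show ?thesis by simp
  qed
qed

definition pi_sum :: "'a \<Rightarrow> nat \<Rightarrow> nat" where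
  "pi_sum x k = (\<Sum>t<k. \<pi> ((\<phi> ^^ t) x))"

lemma funpow_phi_mult:
  assumes "x \<in> carrier G" "y \<in> carrier G"
  shows "(\<phi> ^^ k) (x \<otimes> y) = (\<phi> ^^ k) x \<otimes> (\<phi> ^^ pi_sum x k) y"
proof (induction k)
  case 0 then show ?case by (simp add: pi_sum_def)
next
  case (Suc k)
  then have "(\<phi> ^^ Suc k) (x \<otimes> y) = \<phi> ((\<phi> ^^ k) x \<otimes> (\<phi> ^^ pi_sum x k) y)"
    by simp
  also have "\<dots> = \<phi> ((\<phi> ^^ k) x) \<otimes> (\<phi> ^^ \<pi> ((\<phi> ^^ k) x)) ((\<phi> ^^ pi_sum x k) y)"
    using assms by (simp add: phi_mult)
  also have "\<dots> = (\<phi> ^^ Suc k) x \<otimes> (\<phi> ^^ (\<pi> ((\<phi> ^^ k) x) + pi_sum x k)) y"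
    by (simp add: funpow_add)
  also have "\<pi> ((\<phi> ^^ k) x) + pi_sum x k = pi_sum x (Suc k)"
    by (simp add: pi_sum_def)
  finally show ?case .
qed

lemma pi_mult_mod:
  assumes x: "x \<in> carrier G" and y: "y \<in> carrier G"
  shows "\<pi> (x \<otimes> y) mod order = pi_sum y (\<pi> x) mod order"
proof (rule funpow_phi_eq_imp_mod_eq, intro ballI)
  fix z assume z: "z \<in> carrier G"
  have "\<phi> (x \<otimes> y) \<otimes> (\<phi> ^^ \<pi> (x \<otimes> y)) z = \<phi> (x \<otimes> y \<otimes> z)"
    using x y z by (simp add: phi_mult)
  also have "\<dots> = \<phi> x \<otimes> (\<phi> ^^ \<pi> x) (y \<otimes> z)"
    using x y z by (simp add: m_assoc phi_mult)
  also have "\<dots> = \<phi> x \<otimes> ((\<phi> ^^ \<pi> x) y \<otimes> (\<phi> ^^ pi_sum y (\<pi> x)) z)"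
    using y z by (simp add: funpow_phi_mult)
  also have "\<dots> = \<phi> (x \<otimes> y) \<otimes> (\<phi> ^^ pi_sum y (\<pi> x)) z"
    using x y z by (simp add: phi_mult m_assoc)
  finally show "(\<phi> ^^ \<pi> (x \<otimes> y)) z = (\<phi> ^^ pi_sum y (\<pi> x)) z"
    using x y z by simp
qed

lemma pi_one_mod: "\<pi> \<one> mod order = 1 mod order"
proof (rule funpow_phi_eq_imp_mod_eq, intro ballI)
  fix y assume "y \<in> carrier G"
  then show "(\<phi> ^^ \<pi> \<one>) y = (\<phi> ^^ 1) y"
    using phi_mult[of \<one> y] by (simp add: phi_one)
qed

lemma pi_sum_mod_const:
  "(\<And>t. t < k \<Longrightarrow> \<pi> ((\<phi> ^^ t) x) mod order = r mod order) \<Longrightarrow>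
    pi_sum x k mod order = (k * r) mod order"
  unfolding pi_sum_def by (rule sum_mod_eq_mult_const)

abbreviation Ker :: "'a set" where "Ker \<equiv> skew_kernel G \<phi> \<pi>"
abbreviation Core :: "'a set" where "Core \<equiv> skew_core G \<phi> \<pi>"

lemma mem_Ker_iff: "k \<in> Ker \<longleftrightarrow> k \<in> carrier G \<and> \<pi> k mod order = 1 mod order"
  unfolding skew_kernel_def using pi_less_order by auto

lemma Ker_mult_closed:
  assumes u: "u \<in> Ker" and v: "v \<in> Ker"
  shows "u \<otimes> v \<in> Ker"
proof (cases "order = 1")
  case True
  then show ?thesis using u v by (simp add: mem_Ker_iff)
next
  case False
  then have "1 < order"
    using order_pos by simp
  moreover have "\<pi> u < order" "\<pi> u mod order = 1 mod order"
    using u pi_less_order by (auto simp: mem_Ker_iff)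
  ultimately have "\<pi> u = 1"
    by simp
  then have "\<pi> (u \<otimes> v) mod order = \<pi> v mod order"
    using u v pi_mult_mod by (simp add: mem_Ker_iff pi_sum_def)
  then show ?thesis using u v by (simp add: mem_Ker_iff)
qed

lemma mem_Core_iff: "c \<in> Core \<longleftrightarrow> c \<in> carrier G \<and> (\<forall>j. (\<phi> ^^ j) c \<in> Ker)"
proof
  assume c: "c \<in> Core"
  have orbit: "(\<phi> ^^ j) c \<in> Ker" for j
  proof -
    define i where "i = order - j mod order"
    have "j mod order < order"
      using order_pos by simp
    then have "i \<in> {1..order}" "(j mod order + i) mod order = 0"
      by (simp_all add: i_def)
    then obtain k where k: "k \<in> Ker" "c = (\<phi> ^^ i) k"
      using c unfolding skew_core_def by blast
    have "(j + i) mod order = 0 mod order"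
      using \<open>(j mod order + i) mod order = 0\<close> by (simp add: mod_add_left_eq)
    then have "(\<phi> ^^ (j + i)) k = (\<phi> ^^ 0) k"
      using k by (intro funpow_phi_cong) (auto simp: mem_Ker_iff)
    then show ?thesis using k by (simp add: funpow_add)
  qed
  then show "c \<in> carrier G \<and> (\<forall>j. (\<phi> ^^ j) c \<in> Ker)"
    using orbit[of 0] by (simp add: mem_Ker_iff)
next
  assume c: "c \<in> carrier G \<and> (\<forall>j. (\<phi> ^^ j) c \<in> Ker)"
  have "c \<in> (\<phi> ^^ i) ` Ker" if "i \<in> {1..order}" for i
  proof
    show "c = (\<phi> ^^ i) ((\<phi> ^^ (order - i)) c)"
      using that c funpow_order[of c] funpow_add[of i "order - i" \<phi>] by simp
  qed (use c in blast)
  then show "c \<in> Core" unfolding skew_core_def by blast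
qed

lemma Core_subset: "Core \<subseteq> carrier G"
  using mem_Core_iff by blast

lemma pi_funpow_Core: "c \<in> Core \<Longrightarrow> \<pi> ((\<phi> ^^ j) c) mod order = 1 mod order"
  using mem_Core_iff mem_Ker_iff by blast

lemma funpow_phi_Core:
  assumes "c \<in> Core"
  shows "(\<phi> ^^ m) c \<in> Core"
proof -
  have "(\<phi> ^^ j) ((\<phi> ^^ m) c) = (\<phi> ^^ (j + m)) c" for j
    by (simp add: funpow_add)
  then show ?thesis
    using assms by (simp add: mem_Core_iff)
qed

lemma one_in_Core: "\<one> \<in> Core"
  by (simp add: mem_Core_iff mem_Ker_iff pi_one_mod)

lemma pi_sum_Core: "c \<in> Core \<Longrightarrow> pi_sum c k mod order = k mod order"
  using pi_sum_mod_const[of k c 1] pi_funpow_Core by simp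

lemma Core_mult_closed:
  assumes c: "c \<in> Core" and d: "d \<in> Core"
  shows "c \<otimes> d \<in> Core"
proof -
  have cd: "c \<in> carrier G" "d \<in> carrier G" using c d Core_subset by auto
  have "(\<phi> ^^ j) (c \<otimes> d) = (\<phi> ^^ j) c \<otimes> (\<phi> ^^ j) d" for j
    using cd funpow_phi_mult funpow_phi_cong[OF pi_sum_Core[OF c]] by simp
  then show ?thesis
    using c d cd Ker_mult_closed by (simp add: mem_Core_iff)
qed

lemma subgroup_Core: "subgroup Core G"
proof (rule finite_submonoid_is_subgroup[OF finite_carrier])
  show "submonoid Core G"
    using Core_subset one_in_Core Core_mult_closed by (auto intro: submonoid.intro)
qed

lemma pi_mult_Core:
  assumes x: "x \<in> carrier G" and c: "c \<in> Core"
  shows "\<pi> (x \<otimes> c) = \<pi> x"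
proof -
  have "c \<in> carrier G" using c Core_subset by auto
  then have "\<pi> (x \<otimes> c) mod order = \<pi> x mod order"
    using x c pi_mult_mod pi_sum_Core by simp
  then show ?thesis
    using x \<open>c \<in> carrier G\<close> pi_less_order by simp
qed

lemma induced_skew_lcoset:
  assumes H: "subgroup H G" and phi_H: "\<And>h. h \<in> H \<Longrightarrow> \<phi> h \<in> H" and x: "x \<in> carrier G"
  shows "induced_skew G \<phi> H (x <#\<^bsub>G\<^esub> H) = \<phi> x <#\<^bsub>G\<^esub> H"
proof -
  have funpow_H: "(\<phi> ^^ k) h \<in> H" if "h \<in> H" for h k
    using that by (induction k) (simp_all add: phi_H)
  have "(SOME z. z \<in> x <#\<^bsub>G\<^esub> H) \<in> x <#\<^bsub>G\<^esub> H"
    using lcos_self[OF x H] by (rule someI)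
  then obtain h where h: "h \<in> H" "(SOME z. z \<in> x <#\<^bsub>G\<^esub> H) = x \<otimes> h"
    unfolding l_coset_def by blast
  have "\<phi> (x \<otimes> h) = \<phi> x \<otimes> (\<phi> ^^ \<pi> x) h"
    using x h H by (simp add: phi_mult subgroup.mem_carrier)
  then have "\<phi> (x \<otimes> h) \<in> \<phi> x <#\<^bsub>G\<^esub> H"
    using funpow_H[OF h(1)] unfolding l_coset_def by blast
  then show ?thesis
    using l_repr_independence[OF _ phi_closed[OF x] H] h by (simp add: induced_skew_def)
qed

lemma mem_skew_smooth_iff_Fix:
  assumes x: "x \<in> carrier G"
  shows "x \<in> skew_smooth G \<phi> \<pi> \<longleftrightarrow> x <#\<^bsub>G\<^esub> Core \<in> Fix (induced_skew G \<phi> Core)"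
proof -
  have "\<phi> x <#\<^bsub>G\<^esub> Core = x <#\<^bsub>G\<^esub> Core \<longleftrightarrow> \<phi> x \<in> x <#\<^bsub>G\<^esub> Core"
    using subgroup_Core x by (simp add: lcos_eq_iff_mem_lcos)
  then show ?thesis
    using x funpow_phi_Core[of _ 1] subgroup_Core
    by (simp add: skew_smooth_def Fix_def induced_skew_lcoset)
qed

lemma skew_smooth_imp_pi_orbit_const:
  assumes x: "x \<in> skew_smooth G \<phi> \<pi>"
  shows "\<pi> ((\<phi> ^^ i) x) = \<pi> x"
proof -
  have xG: "x \<in> carrier G" using x by (simp add: skew_smooth_def)
  obtain c0 where c0: "c0 \<in> Core" "\<phi> x = x \<otimes> c0"
    using x unfolding skew_smooth_def l_coset_def by blast
  have "\<exists>c\<in>Core. (\<phi> ^^ i) x = x \<otimes> c"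
  proof (induction i)
    case 0 then show ?case using one_in_Core xG by force
  next
    case (Suc i)
    then obtain c where c: "c \<in> Core" "(\<phi> ^^ i) x = x \<otimes> c" by blast
    have "c \<in> carrier G" "c0 \<in> carrier G" using c c0 Core_subset by auto
    then have "(\<phi> ^^ Suc i) x = x \<otimes> (c0 \<otimes> (\<phi> ^^ \<pi> x) c)"
      using c c0 xG by (simp add: phi_mult m_assoc)
    then show ?case using c c0 Core_mult_closed funpow_phi_Core by blast
  qed
  then show ?thesis using xG pi_mult_Core by auto
qed

lemma phi_inv:
  assumes u: "u \<in> carrier G"
  shows "\<phi> (inv u) = inv ((\<phi> ^^ \<pi> (inv u)) u)"
proof -
  have "\<phi> (inv u) \<otimes> (\<phi> ^^ \<pi> (inv u)) u = \<one>"
    using u phi_mult[of "inv u" u] by (simp add: phi_one)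
  then have "inv ((\<phi> ^^ \<pi> (inv u)) u) = \<phi> (inv u)"
    by (rule inv_equality) (use u in auto)
  then show ?thesis by simp
qed

lemma phi_inv_mult_phi:
  assumes u: "u \<in> carrier G"
  defines "v \<equiv> (\<phi> ^^ \<pi> (inv u)) u"
  shows "\<phi> (inv u \<otimes> \<phi> u) = inv v \<otimes> \<phi> v"
  using u by (simp add: phi_mult phi_inv v_def funpow_swap1)

lemma inv_mult_phi_in_Ker:
  assumes u: "u \<in> carrier G" and const: "\<And>i. \<pi> ((\<phi> ^^ i) u) = \<pi> u"
  shows "inv u \<otimes> \<phi> u \<in> Ker"
proof -
  define q where "q = \<pi> (inv u)"
  have const_phi: "\<pi> ((\<phi> ^^ t) (\<phi> u)) = \<pi> u" for t
    using const[of "Suc t"] by (simp add: funpow_swap1)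
  have "\<pi> \<one> mod order = pi_sum u q mod order"
    using u pi_mult_mod[of "inv u" u] by (simp add: q_def)
  also have "\<dots> = (q * \<pi> u) mod order"
    by (rule pi_sum_mod_const) (simp add: const)
  finally have "\<pi> \<one> mod order = (q * \<pi> u) mod order" .
  moreover have "\<pi> (inv u \<otimes> \<phi> u) mod order = pi_sum (\<phi> u) q mod order"
    using u by (simp add: pi_mult_mod q_def)
  moreover have "pi_sum (\<phi> u) q mod order = (q * \<pi> u) mod order"
    by (rule pi_sum_mod_const) (simp add: const_phi)
  ultimately have "\<pi> (inv u \<otimes> \<phi> u) mod order = 1 mod order"
    using pi_one_mod by simp
  then show ?thesis
    using u by (simp add: mem_Ker_iff)
qed

lemma pi_orbit_const_imp_skew_smooth:
  assumes x: "x \<in> carrier G" and const: "\<And>i. \<pi> ((\<phi> ^^ i) x) = \<pi> x"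
  shows "x \<in> skew_smooth G \<phi> \<pi>"
proof -
  define c where "c = inv x \<otimes> \<phi> x"
  have orbit: "\<exists>i. (\<phi> ^^ j) c = inv ((\<phi> ^^ i) x) \<otimes> \<phi> ((\<phi> ^^ i) x)" for j
  proof (induction j)
    case 0
    have "(\<phi> ^^ 0) c = inv ((\<phi> ^^ 0) x) \<otimes> \<phi> ((\<phi> ^^ 0) x)"
      by (simp add: c_def)
    then show ?case by blast
  next
    case (Suc j)
    then obtain i where i: "(\<phi> ^^ j) c = inv ((\<phi> ^^ i) x) \<otimes> \<phi> ((\<phi> ^^ i) x)" by blast
    define k where "k = \<pi> (inv ((\<phi> ^^ i) x)) + i"
    have "(\<phi> ^^ Suc j) c = inv ((\<phi> ^^ k) x) \<otimes> \<phi> ((\<phi> ^^ k) x)"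
      using i x phi_inv_mult_phi[of "(\<phi> ^^ i) x"] by (simp add: k_def funpow_add)
    then show ?case by blast
  qed
  have orbit_const: "\<pi> ((\<phi> ^^ m) ((\<phi> ^^ i) x)) = \<pi> ((\<phi> ^^ i) x)" for m i
    using const[of "m + i"] const[of i] by (simp add: funpow_add)
  have "(\<phi> ^^ j) c \<in> Ker" for j
  proof -
    obtain i where "(\<phi> ^^ j) c = inv ((\<phi> ^^ i) x) \<otimes> \<phi> ((\<phi> ^^ i) x)"
      using orbit by blast
    moreover have "inv ((\<phi> ^^ i) x) \<otimes> \<phi> ((\<phi> ^^ i) x) \<in> Ker"
      by (rule inv_mult_phi_in_Ker) (use x orbit_const in auto)
    ultimately show ?thesis by simp
  qed
  moreover have "c \<in> carrier G"
    using x by (simp add: c_def)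
  ultimately have "c \<in> Core"
    by (simp add: mem_Core_iff)
  moreover have "\<phi> x = x \<otimes> c"
    using x by (simp add: c_def flip: m_assoc)
  ultimately show ?thesis
    using x unfolding skew_smooth_def l_coset_def by blast
qed

end

theorem proposition3:
  fixes G :: "('a, 'b) monoid_scheme" and \<phi> :: "'a \<Rightarrow> 'a" and \<pi> :: "'a \<Rightarrow> nat" and x :: 'a
  assumes "group G" and "finite (carrier G)"
    and "skew_morphism G \<phi> \<pi>"
    and "x \<in> carrier G"
  shows "(x \<in> skew_smooth G \<phi> \<pi> \<longleftrightarrow> (\<forall>i::nat. \<pi> ((\<phi> ^^ i) x) = \<pi> x))
       \<and> ((\<forall>i::nat. \<pi> ((\<phi> ^^ i) x) = \<pi> x) \<longleftrightarrow>
            x <#\<^bsub>G\<^esub> skew_core G \<phi> \<pi> \<in> Fix (induced_skew G \<phi> (skew_core G \<phi> \<pi>)))"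
proof -
  interpret finite_skew_morphism G \<phi> \<pi>
    using assms by (simp add: finite_skew_morphism_def finite_skew_morphism_axioms_def)
  have "x \<in> skew_smooth G \<phi> \<pi> \<longleftrightarrow> (\<forall>i. \<pi> ((\<phi> ^^ i) x) = \<pi> x)"
    using assms(4) skew_smooth_imp_pi_orbit_const pi_orbit_const_imp_skew_smooth by blast
  then show ?thesis
    using mem_skew_smooth_iff_Fix[OF assms(4)] by blast
qed

end
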